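(* Fix $k\in\{0,1,\infty\}$ and let $\mathbb{L}=\{L\in\mathbb{R}^{n_x\times n_y}:\rho(A-LC)<1\}$. For every $L\in\mathbb{L}$, $$J_k(L)=\max\Big\{\lambda\in\mathbb{R}_+:\ \tfrac12 D_a^\top\Phi(k,L)^\top\Sigma_{r_\omega}^{-1}(L)\Phi(k,L)D_a-\lambda D_a^\top W D_a\succeq 0\Big\}.$$ Consequently, the observer design problem $\max_{L\in\mathbb{R}^{n_x\times n_y}}\{J_k(L):\rho(A-LC)<1\}$ can be reformulated as the joint problem $$\max_{L\in\mathbb{R}^{n_x\times n_y},\ \lambda\in\mathbb{R}_+}\ \lambda\quad\text{s.t.}\quad \tfrac12 D_a^\top\Phi(k,L)^\top\Sigma_{r_\omega}^{-1}(L)\Phi(k,L)D_a-\lambda D_a^\top W D_a\succeq 0,\qquad \rho(A-LC)<1,$$ which has the same optimal value.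
   Context: Consider the discrete-time system $x(k+1)=Ax(k)+Bu(k)+B_\omega\omega(k)$, $y(k)=Cx(k)+D_\omega\omega(k)+y_a(k)$, with $x(k)\in\mathbb{R}^{n_x}$, $y(k)\in\mathbb{R}^{n_y}$, $\omega(k)\in\mathbb{R}^{n_\omega}$ i.i.d. Gaussian $\mathcal N(0,I)$, $(A,C)$ detectable and $(A,B_\omega)$ stabilizable. An observer $\hat x(k+1)=A\hat x(k)+Bu(k)+L(y(k)-C\hat x(k))$ with gain $L\in\mathbb{R}^{n_x\times n_y}$ produces the residual $r(k)=y(k)-C\hat x(k)$. The attack is $y_a(k)=0$ for $k<0$ and $y_a(k)=D_a\bar a$ for $k\ge 0$, where $\bar a\in\mathbb{R}^{n_a}$ and $D_a\in\mathbb{R}^{n_y\times n_a}$ has entries $(j_i,i)=1$ for the indices $j_1<\dots<j_{n_a}$ of compromised sensors and all other entries $0$. $W\in\mathbb{R}^{n_y\times n_y}$ is symmetric positive semidefinite. $\rho(\cdot)$ is the spectral radius and $\mathbb{R}_+$ the positive reals. For $L$ with $\rho(A-LC)<1$, $\Sigma_{\tilde x}(L)$ is the solution of $\Sigma=(A-LC)\Sigma(A-LC)^\top+(B_\omega-LD_\omega)(B_\omega-LD_\omega)^\top$ and $\Sigma_{r_\omega}(L)=C\Sigma_{\tilde x}(L)C^\top+D_\omega D_\omega^\top$ (assumed invertible where its inverse appears). Define $\Phi(0,L)=I$, $\Phi(k,L)=I-C\sum_{l=0}^{k-1}(A-LC)^{k-l-1}L$ for $k\ge1$, and $\Phi(\infty,L)=\lim_{k\to\infty}\Phi(k,L)=I-C(I-A+LC)^{-1}L$.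 Define $$J_k(L)=\min_{\bar a\in\mathbb{R}^{n_a}}\ \tfrac12\bar a^\top D_a^\top\Phi(k,L)^\top\Sigma_{r_\omega}^{-1}(L)\Phi(k,L)D_a\bar a\quad\text{s.t.}\quad \bar a^\top D_a^\top W D_a\bar a\ge 1,$$ the smallest Kullback–Leibler divergence between attacked and attack-free residuals at time $k$ over attacks of impact at least $1$. *)

theory Defs
  imports "Jordan_Normal_Form.Spectral_Radius" "HOL-Library.Extended_Real" "HOL-Library.Extended_Nat"
begin

definition rho :: "real mat \<Rightarrow> real" where
  "rho M = spectral_radius (map_mat complex_of_real M)"

definition mat_inv :: "real mat \<Rightarrow> real mat" where
  "mat_inv M = (SOME N. N \<in> carrier_mat (dim_row M) (dim_row M) \<and> inverts_mat M N \<and> inverts_mat N M)"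

definition psd :: "real mat \<Rightarrow> bool" where
  "psd M \<longleftrightarrow> square_mat M \<and> (\<forall>x \<in> carrier_vec (dim_row M). 0 \<le> x \<bullet> (M *\<^sub>v x))"

definition detectable :: "real mat \<Rightarrow> real mat \<Rightarrow> bool" where
  "detectable A C \<longleftrightarrow> (\<exists>L \<in> carrier_mat (dim_row A) (dim_row C). rho (A - L * C) < 1)"

definition stabilizable :: "real mat \<Rightarrow> real mat \<Rightarrow> bool" where
  "stabilizable A B \<longleftrightarrow> (\<exists>K \<in> carrier_mat (dim_col B) (dim_row A). rho (A - B * K) < 1)"

definition attack_mat :: "nat \<Rightarrow> nat \<Rightarrow> (nat \<Rightarrow> nat) \<Rightarrow> real mat" where
  "attack_mat ny na j = mat ny na (\<lambda>(r, i). if r = j i then 1 else 0)"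

definition Sigma_x :: "real mat \<Rightarrow> real mat \<Rightarrow> real mat \<Rightarrow> real mat \<Rightarrow> real mat \<Rightarrow> real mat" where
  "Sigma_x A Bw C Dw L = (THE S. S \<in> carrier_mat (dim_row A) (dim_row A) \<and>
     S = (A - L * C) * S * transpose_mat (A - L * C)
         + (Bw - L * Dw) * transpose_mat (Bw - L * Dw))"

definition Sigma_r :: "real mat \<Rightarrow> real mat \<Rightarrow> real mat \<Rightarrow> real mat \<Rightarrow> real mat \<Rightarrow> real mat" where
  "Sigma_r A Bw C Dw L = C * Sigma_x A Bw C Dw L * transpose_mat C + Dw * transpose_mat Dw"

definition Phi_fin :: "real mat \<Rightarrow> real mat \<Rightarrow> nat \<Rightarrow> real mat \<Rightarrow> real mat" where
  "Phi_fin A C k L = 1\<^sub>m (dim_row C) - C *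
     fold (\<lambda>l S. S + ((A - L * C) ^\<^sub>m (k - l - 1)) * L) [0..<k] (0\<^sub>m (dim_row A) (dim_row C))"

definition Phi_inf :: "real mat \<Rightarrow> real mat \<Rightarrow> real mat \<Rightarrow> real mat" where
  "Phi_inf A C L = 1\<^sub>m (dim_row C) - C * mat_inv (1\<^sub>m (dim_row A) - A + L * C) * L"

definition Phi :: "real mat \<Rightarrow> real mat \<Rightarrow> enat \<Rightarrow> real mat \<Rightarrow> real mat" where
  "Phi A C k L = (case k of enat n \<Rightarrow> Phi_fin A C n L | \<infinity> \<Rightarrow> Phi_inf A C L)"

definition KL_mat :: "real mat \<Rightarrow> real mat \<Rightarrow> real mat \<Rightarrow> real mat \<Rightarrow> real mat \<Rightarrow> enat \<Rightarrow> real mat \<Rightarrow> real mat" where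
  "KL_mat A Bw C Dw Da k L = transpose_mat Da * transpose_mat (Phi A C k L)
      * mat_inv (Sigma_r A Bw C Dw L) * Phi A C k L * Da"

definition J :: "real mat \<Rightarrow> real mat \<Rightarrow> real mat \<Rightarrow> real mat \<Rightarrow> real mat \<Rightarrow> real mat \<Rightarrow> enat \<Rightarrow> real mat \<Rightarrow> ereal" where
  "J A Bw C Dw W Da k L = Inf { ereal (1/2 * (a \<bullet> (KL_mat A Bw C Dw Da k L *\<^sub>v a))) | a.
      a \<in> carrier_vec (dim_col Da) \<and> a \<bullet> ((transpose_mat Da * W * Da) *\<^sub>v a) \<ge> 1 }"

end

theory Submission
  imports Defs
begin

(* For fixed L, J is the infimum of 1/2 a' K a, with K = KL_mat, over the set where
   a' M a >= 1, M = Da' W Da. Both forms are positive semidefinite and homogeneous of degree 2,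
   so rescaling any a with a' M a > 0 onto a' M a = 1 shows that lam <= J exactly when
   1/2 K - lam M is positive semidefinite; hence J is the supremum of such lam.
   Semidefiniteness of K comes from that of Sigma_x: as rho (A - L C) < 1, the Lyapunov equation
   has exactly one solution, the series of the F^i G G' (F^i)' with geometrically decaying entries.
   The reformulation of the design problem is then an exchange of two suprema. *)

section \<open>Infimum of a homogeneous ratio\<close>

lemma Sup_nonneg_ereal_below:
  assumes I: "0 \<le> I"
  shows "Sup {ereal lam | lam. lam \<ge> 0 \<and> ereal lam \<le> I} = I"
proof (rule antisym)
  show "Sup {ereal lam | lam. lam \<ge> 0 \<and> ereal lam \<le> I} \<le> I"
    by (rule Sup_least) auto
  show "I \<le> Sup {ereal lam | lam. lam \<ge> 0 \<and> ereal lam \<le> I}"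
  proof (subst le_Sup_iff, intro allI impI)
    fix y assume y: "y < I"
    show "\<exists>a\<in>{ereal lam | lam. lam \<ge> 0 \<and> ereal lam \<le> I}. y < a"
    proof (cases "y < 0")
      case True
      then show ?thesis using I by (intro bexI[of _ "ereal 0"]) (auto simp: zero_ereal_def)
    next
      case False
      from ereal_dense2[OF y] obtain z where z: "y < ereal z" "ereal z < I" by auto
      with False have "z \<ge> 0"
        by (metis ereal_less_eq(5) linorder_not_less order_less_imp_le order_trans)
      with z show ?thesis by (intro bexI[of _ "ereal z"]) auto
    qed
  qed
qed

lemma Inf_homogeneous_eq_Sup_multipliers:
  fixes q m :: "'v \<Rightarrow> real" and scale :: "real \<Rightarrow> 'v \<Rightarrow> 'v"
  assumes scale_closed: "\<And>x t. x \<in> V \<Longrightarrow> scale t x \<in> V"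
    and q_scale: "\<And>x t. x \<in> V \<Longrightarrow> q (scale t x) = t^2 * q x"
    and m_scale: "\<And>x t. x \<in> V \<Longrightarrow> m (scale t x) = t^2 * m x"
    and q_nonneg: "\<And>x. x \<in> V \<Longrightarrow> 0 \<le> q x"
    and m_nonneg: "\<And>x. x \<in> V \<Longrightarrow> 0 \<le> m x"
  shows "Inf {ereal (1/2 * q a) | a. a \<in> V \<and> m a \<ge> 1}
       = Sup {ereal lam | lam. lam \<ge> 0 \<and> (\<forall>x\<in>V. 0 \<le> 1/2 * q x - lam * m x)}"
proof -
  define I where "I = Inf {ereal (1/2 * q a) | a. a \<in> V \<and> m a \<ge> 1}"
  have I_nonneg: "0 \<le> I"
    unfolding I_def by (rule Inf_greatest) (auto simp: q_nonneg zero_ereal_def)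
  have multiplier_iff: "(\<forall>x\<in>V. 0 \<le> 1/2 * q x - lam * m x) \<longleftrightarrow> ereal lam \<le> I"
    if lam: "lam \<ge> 0" for lam
  proof
    assume H: "\<forall>x\<in>V. 0 \<le> 1/2 * q x - lam * m x"
    show "ereal lam \<le> I" unfolding I_def
    proof (rule Inf_greatest, clarify)
      fix a assume a: "a \<in> V" "1 \<le> m a"
      have "lam \<le> lam * m a" using lam a by (simp add: mult_le_cancel_left1)
      also have "\<dots> \<le> 1/2 * q a" using H a by auto
      finally show "ereal lam \<le> ereal (1/2 * q a)" by simp
    qed
  next
    assume H: "ereal lam \<le> I"
    show "\<forall>x\<in>V. 0 \<le> 1/2 * q x - lam * m x"
    proof
      fix x assume x: "x \<in> V"
      show "0 \<le> 1/2 * q x - lam * m x"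
      proof (cases "m x = 0")
        case True then show ?thesis using q_nonneg[OF x] by simp
      next
        case False
        hence m_pos: "m x > 0" using m_nonneg[OF x] by simp
        define t where "t = 1 / sqrt (m x)"
        have t2: "t^2 = 1 / m x" unfolding t_def using m_pos by (simp add: power_divide)
        have "m (scale t x) = 1" using m_scale[OF x] t2 m_pos by simp
        hence "I \<le> ereal (1/2 * q (scale t x))" unfolding I_def
          using scale_closed[OF x] by (intro Inf_lower) auto
        with H have "ereal lam \<le> ereal (1/2 * q (scale t x))" by (rule order_trans)
        then have "lam \<le> 1/2 * q (scale t x)" by simp
        also have "\<dots> = 1/2 * q x / m x" using q_scale[OF x] t2 by simp
        finally have "lam * m x \<le> 1/2 * q x" using m_pos by (simp add: pos_le_divide_eq)
        then show ?thesis by simp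
      qed
    qed
  qed
  have "{ereal lam | lam. lam \<ge> 0 \<and> (\<forall>x\<in>V. 0 \<le> 1/2 * q x - lam * m x)}
      = {ereal lam | lam. lam \<ge> 0 \<and> ereal lam \<le> I}"
    using multiplier_iff by blast
  then show ?thesis using Sup_nonneg_ereal_below[OF I_nonneg] unfolding I_def by simp
qed

lemma Sup_image_Sup_eq_Sup_Union:
  fixes Y :: "'a \<Rightarrow> 'b :: complete_lattice set"
  assumes "\<And>x. x \<in> X \<Longrightarrow> f x = Sup (Y x)"
  shows "Sup {f x | x. x \<in> X} = Sup (\<Union>x\<in>X. Y x)"
proof -
  have "{f x | x. x \<in> X} = (\<lambda>x. Sup (Y x)) ` X" using assms by force
  then show ?thesis using SUP_UNION[where f = "\<lambda>x. x" and A = X and g = Y] by simp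
qed

section \<open>Positive semidefinite matrices\<close>

lemma smult_mat_mult_vec:
  "A \<in> carrier_mat n m \<Longrightarrow> v \<in> carrier_vec m \<Longrightarrow> (c \<cdot>\<^sub>m A) *\<^sub>v v = c \<cdot>\<^sub>v (A *\<^sub>v v)"
  by (rule eq_vecI) (auto simp: scalar_prod_def sum_distrib_left ac_simps)

lemma quadratic_form_sum:
  assumes "(M :: real mat) \<in> carrier_mat n n" and "x \<in> carrier_vec n"
  shows "x \<bullet> (M *\<^sub>v x) = (\<Sum>a\<in>{0..<n}. \<Sum>b\<in>{0..<n}. x $ a * x $ b * M $$ (a,b))"
  using assms by (simp add: scalar_prod_def sum_distrib_left ac_simps)

lemma quadratic_form_congruence:
  assumes P: "(P :: real mat) \<in> carrier_mat n m" and Y: "Y \<in> carrier_mat m m" and x: "x \<in> carrier_vec n"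
  shows "x \<bullet> ((P * Y * transpose_mat P) *\<^sub>v x) = (transpose_mat P *\<^sub>v x) \<bullet> (Y *\<^sub>v (transpose_mat P *\<^sub>v x))"
proof -
  have PT: "transpose_mat P \<in> carrier_mat m n" using P by simp
  have "(P * Y * transpose_mat P) *\<^sub>v x = P *\<^sub>v (Y *\<^sub>v (transpose_mat P *\<^sub>v x))"
    using assoc_mult_mat_vec[OF mult_carrier_mat[OF P Y] PT x]
      assoc_mult_mat_vec[OF P Y mult_mat_vec_carrier[OF PT x]] by simp
  moreover have "(transpose_mat P *\<^sub>v x) \<bullet> (Y *\<^sub>v (transpose_mat P *\<^sub>v x))
      = x \<bullet> (P *\<^sub>v (Y *\<^sub>v (transpose_mat P *\<^sub>v x)))"
    by (rule transpose_vec_mult_scalar[OF P _ x]) (use P Y x in auto)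
  ultimately show ?thesis by simp
qed

lemma psd_carrier_iff:
  "M \<in> carrier_mat n n \<Longrightarrow> psd M \<longleftrightarrow> (\<forall>x\<in>carrier_vec n. 0 \<le> x \<bullet> (M *\<^sub>v x))"
  unfolding psd_def by auto

lemma psd_one_mat: "psd (1\<^sub>m n :: real mat)"
  unfolding psd_def scalar_prod_def by (auto intro: sum_nonneg)

lemma psd_add:
  assumes "(A :: real mat) \<in> carrier_mat n n" "B \<in> carrier_mat n n" "psd A" "psd B"
  shows "psd (A + B)"
proof -
  have "x \<bullet> ((A + B) *\<^sub>v x) = x \<bullet> (A *\<^sub>v x) + x \<bullet> (B *\<^sub>v x)" if "x \<in> carrier_vec n" for x
    using assms that by (simp add: add_mult_distrib_mat_vec[of _ n n] scalar_prod_add_distrib[of _ n])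
  then show ?thesis
    using assms by (auto simp: psd_carrier_iff[of _ n] intro: add_nonneg_nonneg)
qed

lemma psd_congruence:
  assumes P: "(P :: real mat) \<in> carrier_mat n m" and Y: "Y \<in> carrier_mat m m" and "psd Y"
  shows "psd (P * Y * transpose_mat P)"
  using assms quadratic_form_congruence[OF P Y]
  by (auto simp: psd_carrier_iff[of _ n] psd_carrier_iff[OF Y])

lemma psd_gram: "(G :: real mat) \<in> carrier_mat n m \<Longrightarrow> psd (G * transpose_mat G)"
  using psd_congruence[OF _ one_carrier_mat psd_one_mat] by simp

lemma invertible_mat_inv:
  assumes M: "M \<in> carrier_mat n n" and "invertible_mat M"
  shows "mat_inv M \<in> carrier_mat n n" and "M * mat_inv M = 1\<^sub>m n"
proof -
  obtain B where MB: "M * B = 1\<^sub>m n" and BM: "B * M = 1\<^sub>m (dim_row B)"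
    using assms unfolding invertible_mat_def inverts_mat_def by auto
  have "B \<in> carrier_mat n n"
    using arg_cong[OF MB, of dim_col] arg_cong[OF BM, of dim_col] M by auto
  then have "\<exists>N. N \<in> carrier_mat (dim_row M) (dim_row M) \<and> inverts_mat M N \<and> inverts_mat N M"
    using MB BM M unfolding inverts_mat_def by auto
  from someI_ex[OF this] show "mat_inv M \<in> carrier_mat n n" and "M * mat_inv M = 1\<^sub>m n"
    using M unfolding mat_inv_def inverts_mat_def by auto
qed

lemma psd_mat_inv:
  assumes M: "(M :: real mat) \<in> carrier_mat n n" and inv: "invertible_mat M" and "psd M"
  shows "psd (mat_inv M)"
proof -
  note Mi = invertible_mat_inv[OF M inv]
  have "0 \<le> y \<bullet> (mat_inv M *\<^sub>v y)" if y: "y \<in> carrier_vec n" for y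
  proof -
    define z where "z = mat_inv M *\<^sub>v y"
    have z: "z \<in> carrier_vec n" unfolding z_def using Mi y by simp
    have "M *\<^sub>v z = y"
      unfolding z_def using assoc_mult_mat_vec[OF M Mi(1) y, symmetric] Mi(2) y by simp
    then have "y \<bullet> (mat_inv M *\<^sub>v y) = z \<bullet> (M *\<^sub>v z)"
      unfolding z_def[symmetric] by (metis comm_scalar_prod mult_mat_vec_carrier M z)
    also have "0 \<le> \<dots>" using \<open>psd M\<close> M z by (simp add: psd_carrier_iff)
    finally show ?thesis .
  qed
  then show ?thesis using Mi(1) by (simp add: psd_carrier_iff)
qed

lemma Inf_quadratic_eq_Sup_psd:
  fixes K M :: "real mat"
  assumes K: "K \<in> carrier_mat n n" "psd K" and M: "M \<in> carrier_mat n n" "psd M"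
  shows "Inf {ereal (1/2 * (a \<bullet> (K *\<^sub>v a))) | a. a \<in> carrier_vec n \<and> a \<bullet> (M *\<^sub>v a) \<ge> 1}
       = Sup {ereal lam | lam. lam \<ge> 0 \<and> psd ((1/2) \<cdot>\<^sub>m K - lam \<cdot>\<^sub>m M)}"
proof -
  have form: "x \<bullet> (((1/2) \<cdot>\<^sub>m K - lam \<cdot>\<^sub>m M) *\<^sub>v x) = 1/2 * (x \<bullet> (K *\<^sub>v x)) - lam * (x \<bullet> (M *\<^sub>v x))"
    if x: "x \<in> carrier_vec n" for x lam
    using K M x by (simp add: minus_mult_distrib_mat_vec[of _ n n] smult_mat_mult_vec[of _ n n]
        scalar_prod_minus_distrib[of x n])
  have KM: "(1/2) \<cdot>\<^sub>m K - lam \<cdot>\<^sub>m M \<in> carrier_mat n n" for lam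
    using M(1) by (intro minus_carrier_mat smult_carrier_mat)
  have "psd ((1/2) \<cdot>\<^sub>m K - lam \<cdot>\<^sub>m M) \<longleftrightarrow>
      (\<forall>x\<in>carrier_vec n. 0 \<le> 1/2 * (x \<bullet> (K *\<^sub>v x)) - lam * (x \<bullet> (M *\<^sub>v x)))" for lam
    unfolding psd_carrier_iff[OF KM] using form by simp
  then show ?thesis
    by (simp only:) (rule Inf_homogeneous_eq_Sup_multipliers[where scale = "\<lambda>t x. t \<cdot>\<^sub>v x"],
        use K M in \<open>auto simp: mult_mat_vec psd_carrier_iff power2_eq_square\<close>)
qed

section \<open>Powers of a matrix with spectral radius below one\<close>

lemma pow_mat_Suc_left: "F \<in> carrier_mat n n \<Longrightarrow> F ^\<^sub>m Suc k = F * F ^\<^sub>m k"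
proof (induct k)
  case (Suc k)
  then have "F ^\<^sub>m Suc (Suc k) = (F * F ^\<^sub>m k) * F" by simp
  also have "\<dots> = F * (F ^\<^sub>m k * F)" using Suc.prems by (simp add: assoc_mult_mat[of _ n n _ n _ n])
  finally show ?case by simp
qed simp

lemma pow_smult_mat:
  assumes G: "(G :: 'a :: comm_ring_1 mat) \<in> carrier_mat n n"
  shows "(c \<cdot>\<^sub>m G) ^\<^sub>m k = (c ^ k) \<cdot>\<^sub>m (G ^\<^sub>m k)"
proof (induct k)
  case 0 then show ?case using G by (auto intro!: eq_matI)
next
  case (Suc k)
  have "(c \<cdot>\<^sub>m G) ^\<^sub>m Suc k = ((c ^ k) \<cdot>\<^sub>m (G ^\<^sub>m k)) * (c \<cdot>\<^sub>m G)" using Suc by simp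
  also have "\<dots> = (c ^ Suc k) \<cdot>\<^sub>m (G ^\<^sub>m Suc k)"
    using G by (simp add: mult_smult_distrib[of _ n n _ n] mult_smult_assoc_mat[of _ n n _ n])
      (rule eq_matI, auto)
  finally show ?case .
qed

lemma spectral_radius_smult_ge:
  assumes G: "G \<in> carrier_mat n n" and n: "0 < n"
  shows "norm c * spectral_radius G \<le> spectral_radius (c \<cdot>\<^sub>m G)"
proof -
  obtain ev where "ev \<in> spectrum G" and radius: "spectral_radius G = norm ev"
    using spectral_radius_mem_max(1)[OF G n] by auto
  then obtain v where "eigenvector G v ev" unfolding spectrum_def eigenvalue_def by auto
  then have "eigenvector (c \<cdot>\<^sub>m G) v (c * ev)"
    using G unfolding eigenvector_def by (auto simp: smult_mat_mult_vec smult_smult_assoc)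
  then have "norm (c * ev) \<in> norm ` spectrum (c \<cdot>\<^sub>m G)"
    unfolding spectrum_def eigenvalue_def by auto
  from spectral_radius_mem_max(2)[OF _ n this] G show ?thesis
    by (simp add: radius norm_mult)
qed

lemma rho_less_1_pow_entries_bound:
  fixes F :: "real mat"
  assumes F: "F \<in> carrier_mat n n" and n: "0 < n" and rF: "rho F < 1"
  obtains r c where "0 < r" "r < 1" "\<And>k i j. i < n \<Longrightarrow> j < n \<Longrightarrow> \<bar>(F ^\<^sub>m k) $$ (i,j)\<bar> \<le> c * r^k"
proof -
  have "0 \<le> rho F"
    using spectral_radius_mem_max(1)[of "map_mat complex_of_real F" n] F n unfolding rho_def by auto
  define r where "r = (1 + rho F) / 2"
  have r: "0 < r" "r < 1" "rho F < r" using \<open>0 \<le> rho F\<close> rF unfolding r_def by auto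
  \<comment> \<open>F / r still has spectral radius below 1, so its powers are bounded (via the Jordan
     normal form); hence F^k = r^k (F / r)^k decays geometrically.\<close>
  define G where "G = (1 / r) \<cdot>\<^sub>m F"
  have G: "G \<in> carrier_mat n n" using F unfolding G_def by simp
  have F_eq: "F = r \<cdot>\<^sub>m G" unfolding G_def using F r by (auto intro!: eq_matI)
  let ?Gc = "map_mat complex_of_real G"
  have "map_mat complex_of_real F = complex_of_real r \<cdot>\<^sub>m ?Gc"
    unfolding F_eq by (auto intro!: eq_matI)
  then have "r * spectral_radius ?Gc \<le> rho F"
    using spectral_radius_smult_ge[of ?Gc n "complex_of_real r"] G n r unfolding rho_def by simp
  then have "spectral_radius ?Gc < 1"
    using r mult_le_cancel_left1[of r "spectral_radius ?Gc"] by linarith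
  from spectral_radius_jnf_norm_bound_less_1_upper_triangular[OF _ this] G
  obtain c where c: "\<And>k. norm_bound (?Gc ^\<^sub>m k) c" by auto
  have "\<bar>(F ^\<^sub>m k) $$ (i,j)\<bar> \<le> c * r^k" if ij: "i < n" "j < n" for k i j
  proof -
    have "?Gc ^\<^sub>m k = map_mat complex_of_real (G ^\<^sub>m k)"
      by (rule of_real_hom.mat_hom_pow[OF G, symmetric])
    then have "\<bar>(G ^\<^sub>m k) $$ (i,j)\<bar> \<le> c"
      using c[of k] ij G unfolding norm_bound_def
      by (metis index_map_mat pow_mat_dim_square carrier_matD norm_of_real)
    moreover have "(F ^\<^sub>m k) $$ (i,j) = r^k * (G ^\<^sub>m k) $$ (i,j)"
      unfolding F_eq pow_smult_mat[OF G] using ij G by simp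
    ultimately show ?thesis using r by (simp add: abs_mult mult.commute mult_left_mono)
  qed
  with r that show ?thesis by blast
qed

lemma entry_congruence:
  assumes "(P :: real mat) \<in> carrier_mat n m" "X \<in> carrier_mat m m" "R \<in> carrier_mat n' m"
    and "a < n" "b < n'"
  shows "(P * X * transpose_mat R) $$ (a,b)
       = (\<Sum>p\<in>{0..<m}. \<Sum>q\<in>{0..<m}. P $$ (a,p) * R $$ (b,q) * X $$ (p,q))"
  using assms by (simp add: scalar_prod_def sum_distrib_left sum_distrib_right ac_simps)

lemma abs_entry_congruence_le:
  assumes "(P :: real mat) \<in> carrier_mat n m" "X \<in> carrier_mat m m" "R \<in> carrier_mat n' m"
    and "a < n" "b < n'"
    and P_le: "\<And>p. p < m \<Longrightarrow> \<bar>P $$ (a,p)\<bar> \<le> e" and R_le: "\<And>p. p < m \<Longrightarrow> \<bar>R $$ (b,p)\<bar> \<le> e"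
  shows "\<bar>(P * X * transpose_mat R) $$ (a,b)\<bar> \<le> e^2 * (\<Sum>p\<in>{0..<m}. \<Sum>q\<in>{0..<m}. \<bar>X $$ (p,q)\<bar>)"
proof -
  have "\<bar>(P * X * transpose_mat R) $$ (a,b)\<bar>
      \<le> (\<Sum>p\<in>{0..<m}. \<Sum>q\<in>{0..<m}. \<bar>P $$ (a,p)\<bar> * \<bar>R $$ (b,q)\<bar> * \<bar>X $$ (p,q)\<bar>)"
    unfolding entry_congruence[OF assms(1-5)] abs_mult[symmetric]
    by (rule order_trans[OF sum_abs sum_mono[OF sum_abs]])
  also have "\<dots> \<le> (\<Sum>p\<in>{0..<m}. \<Sum>q\<in>{0..<m}. e * e * \<bar>X $$ (p,q)\<bar>)"
    by (intro sum_mono mult_right_mono mult_mono P_le R_le) (auto intro: order_trans[OF abs_ge_zero P_le])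
  finally show ?thesis by (simp add: sum_distrib_left power2_eq_square)
qed

lemma summable_conjugate_pow_entry:
  fixes F X :: "real mat"
  assumes F: "F \<in> carrier_mat n n" and n: "0 < n" and rF: "rho F < 1"
    and X: "X \<in> carrier_mat n n" and ab: "a < n" "b < n"
  shows "summable (\<lambda>k. (F ^\<^sub>m k * X * transpose_mat (F ^\<^sub>m k)) $$ (a,b))"
proof -
  obtain r c where r: "0 < r" "r < 1" and rc: "\<And>k i j. i < n \<Longrightarrow> j < n \<Longrightarrow> \<bar>(F ^\<^sub>m k) $$ (i,j)\<bar> \<le> c * r^k"
    using rho_less_1_pow_entries_bound[OF F n rF] by blast
  define s where "s = (\<Sum>p\<in>{0..<n}. \<Sum>q\<in>{0..<n}. \<bar>X $$ (p,q)\<bar>)"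
  have bound: "\<bar>(F ^\<^sub>m k * X * transpose_mat (F ^\<^sub>m k)) $$ (a,b)\<bar> \<le> s * c^2 * (r^2)^k" for k
  proof -
    have "\<bar>(F ^\<^sub>m k * X * transpose_mat (F ^\<^sub>m k)) $$ (a,b)\<bar> \<le> (c * r^k)^2 * s"
      unfolding s_def using rc ab
      by (intro abs_entry_congruence_le[OF pow_carrier_mat[OF F] X pow_carrier_mat[OF F] ab]) auto
    also have "(c * r^k)^2 = c^2 * (r^2)^k"
      by (simp add: power_mult_distrib power_mult[symmetric] mult.commute[of 2 k])
    finally show ?thesis by (simp add: ac_simps)
  qed
  have "summable (\<lambda>k. s * c^2 * (r^2)^k)"
    using r by (intro summable_mult summable_geometric) (simp add: power_less_one_iff)
  then show ?thesis by (rule summable_comparison_test') (use bound in simp)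
qed

lemma conjugate_pow_Suc:
  assumes F: "(F :: real mat) \<in> carrier_mat n n" and X: "X \<in> carrier_mat n n"
  shows "F ^\<^sub>m Suc k * X * transpose_mat (F ^\<^sub>m Suc k)
       = F * (F ^\<^sub>m k * X * transpose_mat (F ^\<^sub>m k)) * transpose_mat F"
proof -
  have "F * (P * X * transpose_mat P) * transpose_mat F = (F * P) * X * transpose_mat (F * P)"
    if P: "P \<in> carrier_mat n n" for P
    using F X P by (simp add: transpose_mult[OF F P] assoc_mult_mat[of _ n n _ n _ n])
  from this[OF pow_carrier_mat[OF F]] show ?thesis unfolding pow_mat_Suc_left[OF F] ..
qed

lemma suminf_weighted_entries:
  fixes T :: "nat \<Rightarrow> real mat"
  assumes T: "\<And>a b. a < n \<Longrightarrow> b < n \<Longrightarrow> summable (\<lambda>i. T i $$ (a,b))"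
  shows "summable (\<lambda>i. \<Sum>a\<in>{0..<n}. \<Sum>b\<in>{0..<n}. u a b * T i $$ (a,b))"
    and "(\<Sum>i. \<Sum>a\<in>{0..<n}. \<Sum>b\<in>{0..<n}. u a b * T i $$ (a,b))
       = (\<Sum>a\<in>{0..<n}. \<Sum>b\<in>{0..<n}. u a b * (\<Sum>i. T i $$ (a,b)))"
proof -
  have row: "summable (\<lambda>i. \<Sum>b\<in>{0..<n}. u a b * T i $$ (a,b))" if "a < n" for a
    using T that by (intro summable_sum summable_mult) auto
  then show "summable (\<lambda>i. \<Sum>a\<in>{0..<n}. \<Sum>b\<in>{0..<n}. u a b * T i $$ (a,b))"
    by (rule summable_sum) simp
  have "(\<Sum>a\<in>{0..<n}. \<Sum>b\<in>{0..<n}. u a b * (\<Sum>i. T i $$ (a,b)))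
      = (\<Sum>a\<in>{0..<n}. \<Sum>b\<in>{0..<n}. \<Sum>i. u a b * T i $$ (a,b))"
    using T by (intro sum.cong refl suminf_mult[symmetric]) auto
  also have "\<dots> = (\<Sum>a\<in>{0..<n}. \<Sum>i. \<Sum>b\<in>{0..<n}. u a b * T i $$ (a,b))"
    using T by (intro sum.cong refl suminf_sum[symmetric] summable_mult) auto
  also have "\<dots> = (\<Sum>i. \<Sum>a\<in>{0..<n}. \<Sum>b\<in>{0..<n}. u a b * T i $$ (a,b))"
    using row by (intro suminf_sum[symmetric]) auto
  finally show "(\<Sum>i. \<Sum>a\<in>{0..<n}. \<Sum>b\<in>{0..<n}. u a b * T i $$ (a,b))
       = (\<Sum>a\<in>{0..<n}. \<Sum>b\<in>{0..<n}. u a b * (\<Sum>i. T i $$ (a,b)))" ..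
qed

section \<open>The discrete Lyapunov equation\<close>

lemma lyapunov_solution_unique:
  fixes F Q S1 S2 :: "real mat"
  assumes F: "F \<in> carrier_mat n n" and n: "0 < n" and rF: "rho F < 1" and Q: "Q \<in> carrier_mat n n"
    and S1: "S1 \<in> carrier_mat n n" "S1 = F * S1 * transpose_mat F + Q"
    and S2: "S2 \<in> carrier_mat n n" "S2 = F * S2 * transpose_mat F + Q"
  shows "S1 = S2"
proof -
  define D where "D = S1 - S2"
  have D: "D \<in> carrier_mat n n" unfolding D_def by (rule minus_carrier_mat[OF S2(1)])
  have "D = (F * S1 * transpose_mat F + Q) - (F * S2 * transpose_mat F + Q)"
    unfolding D_def using S1(2) S2(2) by (rule arg_cong2)
  also have "\<dots> = F * S1 * transpose_mat F - F * S2 * transpose_mat F"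
    using F S1(1) S2(1) Q by (intro eq_matI) auto
  also have "\<dots> = (F * S1 - F * S2) * transpose_mat F"
    using F S1(1) S2(1) by (intro minus_mult_distrib_mat[symmetric]) auto
  also have "\<dots> = F * D * transpose_mat F"
    unfolding D_def mult_minus_distrib_mat[OF F S1(1) S2(1)] ..
  finally have D_fix: "D = F * D * transpose_mat F" .
  have D_pow: "D = F ^\<^sub>m k * D * transpose_mat (F ^\<^sub>m k)" for k
  proof (induct k)
    case 0 then show ?case using D F by simp
  next
    case (Suc k) then show ?case using conjugate_pow_Suc[OF F D, of k] D_fix by simp
  qed
  have "D $$ (a,b) = 0" if ab: "a < n" "b < n" for a b
  proof -
    have "(\<lambda>k. (F ^\<^sub>m k * D * transpose_mat (F ^\<^sub>m k)) $$ (a,b)) \<longlonglongrightarrow> 0"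
      by (rule summable_LIMSEQ_zero[OF summable_conjugate_pow_entry[OF F n rF D ab]])
    then show ?thesis unfolding D_pow[symmetric] by (simp add: LIMSEQ_const_iff)
  qed
  then show ?thesis using S1 S2 unfolding D_def by (intro eq_matI) auto
qed

lemma lyapunov_solution_exists_psd:
  fixes F Q :: "real mat"
  assumes F: "F \<in> carrier_mat n n" and n: "0 < n" and rF: "rho F < 1"
    and Q: "Q \<in> carrier_mat n n" "psd Q"
  obtains S where "S \<in> carrier_mat n n" "S = F * S * transpose_mat F + Q" "psd S"
proof -
  define T where "T i = F ^\<^sub>m i * Q * transpose_mat (F ^\<^sub>m i)" for i
  have T: "T i \<in> carrier_mat n n" for i
    unfolding T_def using F Q(1) by (meson mult_carrier_mat pow_carrier_mat transpose_carrier_mat)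
  have T_summable: "summable (\<lambda>i. T i $$ (a,b))" if "a < n" "b < n" for a b
    unfolding T_def by (rule summable_conjugate_pow_entry[OF F n rF Q(1) that])
  define S where "S = mat n n (\<lambda>(a,b). \<Sum>i. T i $$ (a,b))"
  have S: "S \<in> carrier_mat n n" unfolding S_def by simp
  have "S = F * S * transpose_mat F + Q"
  proof (rule eq_matI)
    fix a b assume "a < dim_row (F * S * transpose_mat F + Q)" "b < dim_col (F * S * transpose_mat F + Q)"
    then have ab: "a < n" "b < n" using Q by auto
    have "(F * S * transpose_mat F) $$ (a,b) = (\<Sum>i. (F * T i * transpose_mat F) $$ (a,b))"
      unfolding entry_congruence[OF F S F ab] entry_congruence[OF F T F ab]
      by (subst suminf_weighted_entries(2)[OF T_summable]) (auto simp: S_def intro!: sum.cong)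
    also have "\<dots> = (\<Sum>i. T (Suc i) $$ (a,b))"
      unfolding T_def conjugate_pow_Suc[OF F Q(1)] ..
    also have "\<dots> = S $$ (a,b) - Q $$ (a,b)"
      using suminf_split_head[OF T_summable[OF ab]] ab F Q unfolding S_def by (simp add: T_def)
    finally show "S $$ (a,b) = (F * S * transpose_mat F + Q) $$ (a,b)" using ab F Q S by simp
  qed (use Q S in auto)
  moreover have "psd S"
  proof -
    have "0 \<le> x \<bullet> (S *\<^sub>v x)" if x: "x \<in> carrier_vec n" for x
    proof -
      have "x \<bullet> (S *\<^sub>v x) = (\<Sum>i. x \<bullet> (T i *\<^sub>v x))"
        unfolding quadratic_form_sum[OF S x] quadratic_form_sum[OF T x]
        by (subst suminf_weighted_entries(2)[OF T_summable]) (auto simp: S_def intro!: sum.cong)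
      also have "0 \<le> \<dots>"
      proof (rule suminf_nonneg)
        show "summable (\<lambda>i. x \<bullet> (T i *\<^sub>v x))"
          unfolding quadratic_form_sum[OF T x] by (rule suminf_weighted_entries(1)[OF T_summable])
        show "0 \<le> x \<bullet> (T i *\<^sub>v x)" for i
        proof -
          have "psd (T i)" unfolding T_def by (rule psd_congruence[OF pow_carrier_mat[OF F] Q])
          then show ?thesis using x unfolding psd_carrier_iff[OF T] by blast
        qed
      qed
      finally show ?thesis .
    qed
    then show ?thesis using S by (simp add: psd_carrier_iff)
  qed
  ultimately show ?thesis using S that by blast
qed

lemma Sigma_x_psd:
  assumes nx: "0 < nx" and A: "A \<in> carrier_mat nx nx" and Bw: "Bw \<in> carrier_mat nx nw"
    and C: "C \<in> carrier_mat ny nx" and Dw: "Dw \<in> carrier_mat ny nw"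
    and L: "L \<in> carrier_mat nx ny" and stable: "rho (A - L * C) < 1"
  shows "Sigma_x A Bw C Dw L \<in> carrier_mat nx nx" and "psd (Sigma_x A Bw C Dw L)"
proof -
  define F where "F = A - L * C"
  define G where "G = Bw - L * Dw"
  have F: "F \<in> carrier_mat nx nx" and G: "G \<in> carrier_mat nx nw"
    unfolding F_def G_def using C Dw L by (meson minus_carrier_mat mult_carrier_mat)+
  have rF: "rho F < 1" unfolding F_def by (rule stable)
  have Q: "G * transpose_mat G \<in> carrier_mat nx nx" "psd (G * transpose_mat G)"
    using G psd_gram by auto
  obtain S where S: "S \<in> carrier_mat nx nx" "S = F * S * transpose_mat F + G * transpose_mat G" "psd S"
    using lyapunov_solution_exists_psd[OF F nx rF Q] .
  have "Sigma_x A Bw C Dw L = S"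
    unfolding Sigma_x_def F_def[symmetric] G_def[symmetric] carrier_matD(1)[OF A]
    using S lyapunov_solution_unique[OF F nx rF Q(1)] by blast
  then show "Sigma_x A Bw C Dw L \<in> carrier_mat nx nx" and "psd (Sigma_x A Bw C Dw L)"
    using S by auto
qed

lemma Sigma_r_psd:
  assumes nx: "0 < nx" and A: "A \<in> carrier_mat nx nx" and Bw: "Bw \<in> carrier_mat nx nw"
    and C: "C \<in> carrier_mat ny nx" and Dw: "Dw \<in> carrier_mat ny nw"
    and L: "L \<in> carrier_mat nx ny" and stable: "rho (A - L * C) < 1"
  shows "Sigma_r A Bw C Dw L \<in> carrier_mat ny ny" and "psd (Sigma_r A Bw C Dw L)"
proof -
  note Sx = Sigma_x_psd[OF assms]
  show "Sigma_r A Bw C Dw L \<in> carrier_mat ny ny"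
    unfolding Sigma_r_def using Sx(1) C Dw by simp
  show "psd (Sigma_r A Bw C Dw L)"
    unfolding Sigma_r_def using Sx C Dw
    by (intro psd_add[of _ ny] psd_congruence psd_gram) auto
qed

lemma Phi_carrier_mat:
  assumes C: "C \<in> carrier_mat ny nx" and L: "L \<in> carrier_mat nx ny"
  shows "Phi A C k L \<in> carrier_mat ny ny"
proof (cases k)
  case (enat m)
  have fold_dim: "dim_col (fold (\<lambda>l S. S + (A - L * C) ^\<^sub>m (m - l - 1) * L) xs S0) = ny"
    if "dim_col S0 = ny" for xs and S0 :: "real mat"
    using that L by (induction xs arbitrary: S0) auto
  show ?thesis
    unfolding Phi_def Phi_fin_def enat
    by (rule carrier_matI)
      (simp_all only: index_minus_mat index_mult_mat carrier_matD[OF C] fold_dim index_zero_mat enat.case)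
next
  case infinity
  show ?thesis
    unfolding Phi_def Phi_inf_def infinity
    by (rule carrier_matI)
      (simp_all only: index_minus_mat index_mult_mat carrier_matD[OF C] carrier_matD[OF L] enat.case)
qed

lemma KL_mat_psd:
  assumes nx: "0 < nx" and A: "A \<in> carrier_mat nx nx" and Bw: "Bw \<in> carrier_mat nx nw"
    and C: "C \<in> carrier_mat ny nx" and Dw: "Dw \<in> carrier_mat ny nw"
    and L: "L \<in> carrier_mat nx ny" and stable: "rho (A - L * C) < 1"
    and inv: "invertible_mat (Sigma_r A Bw C Dw L)" and Da: "Da \<in> carrier_mat ny na"
  shows "KL_mat A Bw C Dw Da k L \<in> carrier_mat na na" and "psd (KL_mat A Bw C Dw Da k L)"
proof -
  note Sr = Sigma_r_psd[OF nx A Bw C Dw L stable]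
  define Si where "Si = mat_inv (Sigma_r A Bw C Dw L)"
  have Si: "Si \<in> carrier_mat ny ny" "psd Si"
    unfolding Si_def using invertible_mat_inv(1)[OF Sr(1) inv] psd_mat_inv[OF Sr(1) inv Sr(2)] by auto
  define P where "P = Phi A C k L"
  have P: "P \<in> carrier_mat ny ny" unfolding P_def by (rule Phi_carrier_mat[OF C L])
  define B where "B = transpose_mat (P * Da)"
  have B: "B \<in> carrier_mat na ny" unfolding B_def using P Da by simp
  have "KL_mat A Bw C Dw Da k L = transpose_mat Da * transpose_mat P * Si * (P * Da)"
    unfolding KL_mat_def P_def[symmetric] Si_def[symmetric]
    using Da P Si by (simp add: assoc_mult_mat[of _ na ny _ ny _ na])
  also have "\<dots> = B * Si * transpose_mat B"
    unfolding B_def transpose_transpose unfolding transpose_mult[OF P Da] ..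
  finally show "KL_mat A Bw C Dw Da k L \<in> carrier_mat na na" and "psd (KL_mat A Bw C Dw Da k L)"
    using B Si psd_congruence[OF B Si(1,2)] by auto
qed

lemma J_eq_Sup_psd:
  assumes nx: "0 < nx" and A: "A \<in> carrier_mat nx nx" and Bw: "Bw \<in> carrier_mat nx nw"
    and C: "C \<in> carrier_mat ny nx" and Dw: "Dw \<in> carrier_mat ny nw"
    and L: "L \<in> carrier_mat nx ny" and stable: "rho (A - L * C) < 1"
    and inv: "invertible_mat (Sigma_r A Bw C Dw L)" and Da: "Da \<in> carrier_mat ny na"
    and W: "W \<in> carrier_mat ny ny" "psd W"
  shows "J A Bw C Dw W Da k L = Sup {ereal lam | lam. lam \<ge> 0 \<and>
           psd ((1/2) \<cdot>\<^sub>m KL_mat A Bw C Dw Da k L - lam \<cdot>\<^sub>m (transpose_mat Da * W * Da))}"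
proof -
  have "psd (transpose_mat Da * W * Da)"
    using psd_congruence[of "transpose_mat Da" na ny W] Da W by simp
  then show ?thesis
    unfolding J_def carrier_matD(2)[OF Da]
    using Inf_quadratic_eq_Sup_psd KL_mat_psd[OF assms(1-9)] Da W by simp
qed

theorem lemma1:
  fixes nx ny nw na :: nat and A Bw C Dw W L :: "real mat" and j :: "nat \<Rightarrow> nat" and k :: enat
  assumes nx: "0 < nx"
    and A: "A \<in> carrier_mat nx nx" and Bw: "Bw \<in> carrier_mat nx nw"
    and C: "C \<in> carrier_mat ny nx" and Dw: "Dw \<in> carrier_mat ny nw"
    and det: "detectable A C" and stab: "stabilizable A Bw"
    and W: "W \<in> carrier_mat ny ny" "transpose_mat W = W" "psd W"
    and j: "strict_mono_on {..<na} j" "\<forall>i<na. j i < ny"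
    and inv: "\<forall>L' \<in> carrier_mat nx ny. rho (A - L' * C) < 1 \<longrightarrow>
                 invertible_mat (Sigma_r A Bw C Dw L')"
    and k: "k \<in> {0, 1, \<infinity>}"
  shows "(\<forall>L \<in> carrier_mat nx ny. rho (A - L * C) < 1 \<longrightarrow>
            J A Bw C Dw W (attack_mat ny na j) k L =
            Sup { ereal lam | lam. lam \<ge> 0 \<and>
                  psd ((1/2) \<cdot>\<^sub>m KL_mat A Bw C Dw (attack_mat ny na j) k L
                       - lam \<cdot>\<^sub>m (transpose_mat (attack_mat ny na j) * W * attack_mat ny na j)) })
       \<and> Sup { J A Bw C Dw W (attack_mat ny na j) k L | L.
                L \<in> carrier_mat nx ny \<and> rho (A - L * C) < 1 }
         = Sup { ereal lam | lam L. L \<in> carrier_mat nx ny \<and> lam \<ge> 0 \<and>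
                  psd ((1/2) \<cdot>\<^sub>m KL_mat A Bw C Dw (attack_mat ny na j) k L
                       - lam \<cdot>\<^sub>m (transpose_mat (attack_mat ny na j) * W * attack_mat ny na j))
                  \<and> rho (A - L * C) < 1 }"
proof -
  have Da: "attack_mat ny na j \<in> carrier_mat ny na" unfolding attack_mat_def by simp
  let ?stable = "{L. L \<in> carrier_mat nx ny \<and> rho (A - L * C) < 1}"
  let ?R = "\<lambda>L. {ereal lam | lam. lam \<ge> 0 \<and>
              psd ((1/2) \<cdot>\<^sub>m KL_mat A Bw C Dw (attack_mat ny na j) k L
                   - lam \<cdot>\<^sub>m (transpose_mat (attack_mat ny na j) * W * attack_mat ny na j))}"
  have per_L: "J A Bw C Dw W (attack_mat ny na j) k L = Sup (?R L)"
    if "L \<in> ?stable" for L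
    using that inv J_eq_Sup_psd[OF nx A Bw C Dw _ _ _ Da W(1,3)] by blast
  have "Sup {J A Bw C Dw W (attack_mat ny na j) k L | L. L \<in> carrier_mat nx ny \<and> rho (A - L * C) < 1}
      = Sup (\<Union>L\<in>?stable. ?R L)"
    using Sup_image_Sup_eq_Sup_Union[of ?stable, OF per_L] by simp
  also have "(\<Union>L\<in>?stable. ?R L)
      = {ereal lam | lam L. L \<in> carrier_mat nx ny \<and> lam \<ge> 0 \<and>
                  psd ((1/2) \<cdot>\<^sub>m KL_mat A Bw C Dw (attack_mat ny na j) k L
                       - lam \<cdot>\<^sub>m (transpose_mat (attack_mat ny na j) * W * attack_mat ny na j))
                  \<and> rho (A - L * C) < 1}"
    by auto
  finally show ?thesis using per_L by auto
qed

end
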